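(* Let $F$ be a field of characteristic zero and let $n\ge 2$. Let $C_n$ be the oriented cycle quiver with $n$ vertices and $FC_n$ its path algebra over $F$. Then $\mathrm{Id}(FC_n)=\mathrm{Id}(M_n(F))$.
   Context: The oriented cycle $C_n$ has vertices $1,\dots,n$ and arrows $i\to i+1$ for $1\le i<n$ and $n\to 1$. The path algebra $FC_n$ is the $F$-vector space with basis all paths of $C_n$ (including length-zero paths at each vertex), with product of paths $p,q$ equal to the concatenation $pq$ if the terminal vertex of $p$ equals the starting vertex of $q$, and $0$ otherwise. $M_n(F)$ is the algebra of $n\times n$ matrices over $F$. For an $F$-algebra $A$, $\mathrm{Id}(A)$ denotes the T-ideal of the free associative algebra $F\langle X\rangle$ consisting of all polynomial identities satisfied by $A$. *)

theory Defs
  imports Main "Jordan_Normal_Form.Matrix"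
begin

text \<open>Elements of the free associative (unital) algebra over 'a on the countably
many variables x_0, x_1, ...: finitely supported coefficient functions on words
(a word is a list of variable indices; the empty word is the unit).\<close>

type_synonym 'a ncpoly = "nat list \<Rightarrow> 'a"

definition ncpolys :: "('a::zero) ncpoly set" where
  "ncpolys = {f. finite {w. f w \<noteq> 0}}"

definition mat_word :: "nat \<Rightarrow> (nat \<Rightarrow> 'a::field mat) \<Rightarrow> nat list \<Rightarrow> 'a mat" where
  "mat_word n s w = foldr (\<lambda>i acc. s i * acc) w (1\<^sub>m n)"

definition mat_eval :: "nat \<Rightarrow> 'a::field ncpoly \<Rightarrow> (nat \<Rightarrow> 'a mat) \<Rightarrow> 'a mat" where
  "mat_eval n f s = mat n n (\<lambda>(i,j). \<Sum>w\<in>{w. f w \<noteq> 0}. f w * mat_word n s w $$ (i,j))"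

definition Id_mat :: "nat \<Rightarrow> 'a::field ncpoly set" where
  "Id_mat n = {f \<in> ncpolys. \<forall>s. (\<forall>i. s i \<in> carrier_mat n n) \<longrightarrow> mat_eval n f s = 0\<^sub>m n n}"

text \<open>Vertices of C_n are 0,...,n-1 (shifted from 1,...,n); the arrows are i -> (i+1) mod n.
A path of C_n is uniquely determined by its starting vertex i and its length k;
it ends at (i+k) mod n.  An element of F C_n is a finitely supported coefficient
function on the pairs (i,k) with i < n.  The product of the paths (i,k) and (j,l)
is (i,k+l) if (i+k) mod n = j, and 0 otherwise.\<close>

definition pa_carrier :: "nat \<Rightarrow> (nat \<times> nat \<Rightarrow> 'a::zero) set" where
  "pa_carrier n = {a. finite {p. a p \<noteq> 0} \<and> (\<forall>i k. a (i,k) \<noteq> 0 \<longrightarrow> i < n)}"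

definition pa_mult :: "nat \<Rightarrow> (nat \<times> nat \<Rightarrow> 'a::field) \<Rightarrow> (nat \<times> nat \<Rightarrow> 'a) \<Rightarrow> (nat \<times> nat \<Rightarrow> 'a)" where
  "pa_mult n a b = (\<lambda>(i,m). \<Sum>k\<le>m. a (i,k) * b ((i+k) mod n, m-k))"

definition pa_one :: "nat \<Rightarrow> (nat \<times> nat \<Rightarrow> 'a::field)" where
  "pa_one n = (\<lambda>(i,k). if i < n \<and> k = 0 then 1 else 0)"

definition pa_word :: "nat \<Rightarrow> (nat \<Rightarrow> (nat \<times> nat \<Rightarrow> 'a::field)) \<Rightarrow> nat list \<Rightarrow> (nat \<times> nat \<Rightarrow> 'a)" where
  "pa_word n s w = foldr (\<lambda>i acc. pa_mult n (s i) acc) w (pa_one n)"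

definition pa_eval :: "nat \<Rightarrow> 'a::field ncpoly \<Rightarrow> (nat \<Rightarrow> (nat \<times> nat \<Rightarrow> 'a)) \<Rightarrow> (nat \<times> nat \<Rightarrow> 'a)" where
  "pa_eval n f s = (\<lambda>p. \<Sum>w\<in>{w. f w \<noteq> 0}. f w * pa_word n s w p)"

definition Id_pa :: "nat \<Rightarrow> 'a::field ncpoly set" where
  "Id_pa n = {f \<in> ncpolys. \<forall>s. (\<forall>i. s i \<in> pa_carrier n) \<longrightarrow> pa_eval n f s = (\<lambda>_. 0)}"

end

theory Submission
  imports Defs "HOL-Computational_Algebra.Polynomial"
begin

text \<open>For \<open>x \<in> F\<close>, sending the path of length \<open>k\<close> from vertex \<open>i\<close> to \<open>x\<^sup>k E\<^sub>i\<^sub>j\<close>,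
  where \<open>j = (i + k) mod n\<close> is its end vertex and \<open>E\<^sub>i\<^sub>j\<close> a matrix unit, is an algebra
  homomorphism \<open>\<phi>\<^sub>x : F C\<^sub>n \<rightarrow> M\<^sub>n(F)\<close>. The map \<open>\<phi>\<^sub>1\<close> is surjective, so every identity
  of \<open>F C\<^sub>n\<close> holds in \<open>M\<^sub>n(F)\<close>. Conversely, the \<open>(i, j)\<close> entry of \<open>\<phi>\<^sub>x(a)\<close> is a
  polynomial in \<open>x\<close> whose coefficients are the coefficients of \<open>a\<close> on the paths from \<open>i\<close>
  to \<open>j\<close>. Over a field of characteristic zero a polynomial that vanishes everywhere is
  zero, so the maps \<open>\<phi>\<^sub>x\<close> are jointly injective and every identity of \<open>M\<^sub>n(F)\<close> holds
  in \<open>F C\<^sub>n\<close>; in effect \<open>F C\<^sub>n\<close> embeds into \<open>M\<^sub>n(F[x])\<close>.\<close>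

lemma polyfun_eq_0_imp_coeff_eq_0:
  fixes c :: "nat \<Rightarrow> 'a::{idom,ring_char_0}"
  assumes "\<And>x. (\<Sum>k<N. c k * x ^ k) = 0" and "k < N"
  shows "c k = 0"
proof -
  define p where "p = (\<Sum>k<N. monom (c k) k)"
  have "\<forall>x. poly p x = 0"
    using assms(1) by (simp add: p_def poly_sum poly_monom)
  then have "p = 0"
    using poly_all_0_iff_0 by blast
  moreover have "coeff p k = c k"
    using assms(2) by (simp add: p_def coeff_sum)
  ultimately show ?thesis by simp
qed

lemma sum_product_eq_sum_triangle:
  fixes g :: "nat \<Rightarrow> nat \<Rightarrow> 'a::comm_monoid_add"
  assumes "\<And>k r. g k r \<noteq> 0 \<Longrightarrow> k < N \<and> r < M"
  shows "(\<Sum>k<N. \<Sum>r<M. g k r) = (\<Sum>m<N + M. \<Sum>k\<le>m. g k (m - k))"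
proof -
  have "(\<Sum>k<N. \<Sum>r<M. g k r) = (\<Sum>(k, r)\<in>{..<N} \<times> {..<M}. g k r)"
    by (simp add: sum.cartesian_product)
  also have "\<dots> = (\<Sum>(k, r)\<in>{(k, r). k + r < N + M}. g k r)"
  proof (rule sum.mono_neutral_left)
    show "finite {(k, r). k + r < N + M}"
      by (rule finite_subset[of _ "{..<N + M} \<times> {..<N + M}"]) auto
  qed (use assms in auto)
  also have "\<dots> = (\<Sum>m<N + M. \<Sum>k\<le>m. g k (m - k))"
    by (rule sum.triangle_reindex)
  finally show ?thesis .
qed

lemma add_mod_eq_iff:
  fixes i j k n :: nat
  assumes "i < n" "j < n" "k < n"
  shows "(i + k) mod n = j \<longleftrightarrow> k = (j + n - i) mod n"
proof -
  have "(i + k) mod n = (if i + k < n then i + k else i + k - n)"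
    and "(j + n - i) mod n = (if j + n - i < n then j + n - i else j - i)"
    using assms by (simp_all add: mod_if)
  then show ?thesis
    using assms by (cases "i + k < n"; cases "j + n - i < n") auto
qed

definition length_bound :: "(nat \<times> nat \<Rightarrow> 'a::zero) \<Rightarrow> nat \<Rightarrow> bool" where
  "length_bound a N \<longleftrightarrow> (\<forall>i k. a (i, k) \<noteq> 0 \<longrightarrow> k < N)"

lemma length_bound_pa_mult:
  assumes "length_bound a N" "length_bound b M"
  shows "length_bound (pa_mult n a b) (N + M)"
  unfolding length_bound_def
proof (intro allI impI)
  fix i m
  assume "pa_mult n a b (i, m) \<noteq> 0"
  then have "(\<Sum>k\<le>m. a (i, k) * b ((i + k) mod n, m - k)) \<noteq> 0"
    by (simp add: pa_mult_def)
  then obtain k where "k \<le> m" and "a (i, k) * b ((i + k) mod n, m - k) \<noteq> 0"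
    by (meson atMost_iff sum.not_neutral_contains_not_neutral)
  then have "k < N" "m - k < M"
    using assms unfolding length_bound_def by auto
  with \<open>k \<le> m\<close> show "m < N + M"
    by linarith
qed

lemma ex_length_bound_family:
  assumes "finite W" "\<And>w. w \<in> W \<Longrightarrow> b w \<in> pa_carrier n"
  shows "\<exists>N. \<forall>w\<in>W. length_bound (b w) N"
proof -
  let ?S = "\<Union>w\<in>W. {p. b w p \<noteq> 0}"
  have "finite ?S"
    using assms by (auto simp: pa_carrier_def)
  then obtain N where N: "\<forall>k \<in> snd ` ?S. k < N"
    by (meson finite_imageI finite_nat_set_iff_bounded)
  have "k < N" if "w \<in> W" "b w (i, k) \<noteq> 0" for w i k
    using N that by (metis (mono_tags, lifting) UN_I image_eqI mem_Collect_eq snd_conv)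
  then show ?thesis
    unfolding length_bound_def by blast
qed

lemma pa_carrier_iff:
  "a \<in> pa_carrier n \<longleftrightarrow> (\<exists>N. length_bound a N) \<and> (\<forall>i k. a (i, k) \<noteq> 0 \<longrightarrow> i < n)"
proof
  assume "a \<in> pa_carrier n"
  then show "(\<exists>N. length_bound a N) \<and> (\<forall>i k. a (i, k) \<noteq> 0 \<longrightarrow> i < n)"
    using ex_length_bound_family[of "{a}" id n] by (auto simp: pa_carrier_def)
next
  assume "(\<exists>N. length_bound a N) \<and> (\<forall>i k. a (i, k) \<noteq> 0 \<longrightarrow> i < n)"
  then obtain N where "length_bound a N" and rows: "\<forall>i k. a (i, k) \<noteq> 0 \<longrightarrow> i < n"
    by blast
  then have "{p. a p \<noteq> 0} \<subseteq> {..<n} \<times> {..<N}"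
    unfolding length_bound_def by auto
  then show "a \<in> pa_carrier n"
    unfolding pa_carrier_def using rows finite_subset by blast
qed

lemma pa_mult_carrier:
  assumes "a \<in> pa_carrier n" "b \<in> pa_carrier n"
  shows "pa_mult n a b \<in> pa_carrier n"
proof -
  obtain N M where "length_bound a N" "length_bound b M"
    using assms by (auto simp: pa_carrier_iff)
  then have "length_bound (pa_mult n a b) (N + M)"
    by (rule length_bound_pa_mult)
  moreover have "pa_mult n a b (i, m) = 0" if "\<not> i < n" for i m
  proof -
    have "a (i, k) = 0" for k
      using assms(1) that unfolding pa_carrier_iff by blast
    then show ?thesis
      unfolding pa_mult_def by simp
  qed
  ultimately show ?thesis
    unfolding pa_carrier_iff by blast
qed

lemma pa_one_carrier: "pa_one n \<in> pa_carrier n"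
  unfolding pa_carrier_iff length_bound_def pa_one_def by auto

lemma pa_word_carrier:
  assumes "\<And>i. s i \<in> pa_carrier n"
  shows "pa_word n s w \<in> pa_carrier n"
  by (induction w) (simp_all add: pa_word_def pa_one_carrier pa_mult_carrier assms)

lemma pa_lincomb_carrier:
  fixes b :: "'w \<Rightarrow> nat \<times> nat \<Rightarrow> 'a::semiring_0"
  assumes "finite W" "\<And>w. w \<in> W \<Longrightarrow> b w \<in> pa_carrier n"
  shows "(\<lambda>p. \<Sum>w\<in>W. c w * b w p) \<in> pa_carrier n"
proof -
  have nonzero_term: "\<exists>w\<in>W. b w p \<noteq> 0" if "(\<Sum>w\<in>W. c w * b w p) \<noteq> 0" for p
    by (rule sum.not_neutral_contains_not_neutral[OF that]) (metis mult_zero_right)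
  have "{p. (\<Sum>w\<in>W. c w * b w p) \<noteq> 0} \<subseteq> (\<Union>w\<in>W. {p. b w p \<noteq> 0})"
    using nonzero_term by auto
  moreover have "finite (\<Union>w\<in>W. {p. b w p \<noteq> 0})"
    using assms by (simp add: pa_carrier_def)
  ultimately have "finite {p. (\<Sum>w\<in>W. c w * b w p) \<noteq> 0}"
    by (rule finite_subset)
  moreover have "i < n" if nonzero: "(\<Sum>w\<in>W. c w * b w (i, k)) \<noteq> 0" for i k
  proof -
    obtain w where "w \<in> W" "b w (i, k) \<noteq> 0"
      using nonzero_term[OF nonzero] by blast
    then show ?thesis
      using assms(2) unfolding pa_carrier_def by blast
  qed
  ultimately show ?thesis
    unfolding pa_carrier_def by blast
qed

lemma pa_eval_carrier:
  assumes "f \<in> ncpolys" "\<And>i. s i \<in> pa_carrier n"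
  shows "pa_eval n f s \<in> pa_carrier n"
  unfolding pa_eval_def
  using assms by (intro pa_lincomb_carrier pa_word_carrier) (auto simp: ncpolys_def)

definition path_matrix :: "nat \<Rightarrow> 'a::field \<Rightarrow> (nat \<times> nat \<Rightarrow> 'a) \<Rightarrow> 'a mat" where
  "path_matrix n x a =
     mat n n (\<lambda>(i, j). \<Sum>k | a (i, k) \<noteq> 0. if (i + k) mod n = j then a (i, k) * x ^ k else 0)"

lemma dim_path_matrix [simp]:
  "dim_row (path_matrix n x a) = n" "dim_col (path_matrix n x a) = n"
  unfolding path_matrix_def by simp_all

lemma path_matrix_carrier: "path_matrix n x a \<in> carrier_mat n n"
  by (simp add: carrier_matI)

lemma path_matrix_entry:
  assumes "length_bound a N" "i < n" "j < n"
  shows "path_matrix n x a $$ (i, j) = (\<Sum>k<N. if (i + k) mod n = j then a (i, k) * x ^ k else 0)"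
proof -
  have "{k. a (i, k) \<noteq> 0} \<subseteq> {..<N}"
    using assms(1) unfolding length_bound_def by auto
  then show ?thesis
    using assms(2,3) unfolding path_matrix_def
    by (auto intro!: sum.mono_neutral_left split: if_splits)
qed

lemma path_matrix_zero: "path_matrix n x (\<lambda>_. 0) = 0\<^sub>m n n"
proof -
  have "length_bound (\<lambda>_. 0) 0"
    by (simp add: length_bound_def)
  from path_matrix_entry[OF this] show ?thesis
    by (intro eq_matI) simp_all
qed

lemma path_matrix_one:
  assumes "0 < n"
  shows "path_matrix n x (pa_one n) = 1\<^sub>m n"
proof (rule eq_matI)
  fix i j
  assume "i < dim_row (1\<^sub>m n :: 'a mat)" "j < dim_col (1\<^sub>m n :: 'a mat)"
  then have i: "i < n" and j: "j < n"
    by simp_all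
  have "length_bound (pa_one n) 1"
    unfolding length_bound_def pa_one_def by auto
  then have "path_matrix n x (pa_one n) $$ (i, j) =
    (\<Sum>k<1. if (i + k) mod n = j then pa_one n (i, k) * x ^ k else 0)"
    using i j by (rule path_matrix_entry)
  also have "\<dots> = 1\<^sub>m n $$ (i, j)"
    using i j by (simp add: pa_one_def)
  finally show "path_matrix n x (pa_one n) $$ (i, j) = 1\<^sub>m n $$ (i, j)" .
qed simp_all

lemma path_matrix_times_entry:
  assumes n: "0 < n" and a: "length_bound a N" and b: "length_bound b M"
    and i: "i < n" and j: "j < n"
  shows "(path_matrix n x a * path_matrix n x b) $$ (i, j) =
    (\<Sum>k<N. \<Sum>r<M. if (i + k + r) mod n = j
      then a (i, k) * b ((i + k) mod n, r) * x ^ (k + r) else 0)"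
proof -
  let ?B = "path_matrix n x b"
  have "(path_matrix n x a * ?B) $$ (i, j) = (\<Sum>l<n. path_matrix n x a $$ (i, l) * ?B $$ (l, j))"
    using i j by (simp add: scalar_prod_def atLeast0LessThan)
  also have "\<dots> = (\<Sum>l<n. \<Sum>k<N. if (i + k) mod n = l then a (i, k) * x ^ k * ?B $$ (l, j) else 0)"
    using i
    by (intro sum.cong refl) (auto simp: path_matrix_entry[OF a] sum_distrib_right intro!: sum.cong)
  also have "\<dots> = (\<Sum>k<N. \<Sum>l<n. if (i + k) mod n = l then a (i, k) * x ^ k * ?B $$ (l, j) else 0)"
    by (rule sum.swap)
  also have "\<dots> = (\<Sum>k<N. a (i, k) * x ^ k * ?B $$ ((i + k) mod n, j))"
    using n by (intro sum.cong refl) simp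
  also have "\<dots> = (\<Sum>k<N. \<Sum>r<M. if (i + k + r) mod n = j
      then a (i, k) * b ((i + k) mod n, r) * x ^ (k + r) else 0)"
  proof (intro sum.cong refl)
    fix k
    have "(i + k) mod n < n"
      using n by simp
    then have "a (i, k) * x ^ k * ?B $$ ((i + k) mod n, j) =
      (\<Sum>r<M. a (i, k) * x ^ k *
        (if ((i + k) mod n + r) mod n = j then b ((i + k) mod n, r) * x ^ r else 0))"
      by (simp add: path_matrix_entry[OF b _ j] sum_distrib_left)
    also have "\<dots> = (\<Sum>r<M. if (i + k + r) mod n = j
        then a (i, k) * b ((i + k) mod n, r) * x ^ (k + r) else 0)"
      by (intro sum.cong refl) (simp add: mod_add_left_eq mod_add_right_eq power_add ac_simps)
    finally show "a (i, k) * x ^ k * ?B $$ ((i + k) mod n, j) = \<dots>" .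
  qed
  finally show ?thesis .
qed

lemma path_matrix_mult:
  assumes n: "0 < n" and a: "length_bound a N" and b: "length_bound b M"
  shows "path_matrix n x (pa_mult n a b) = path_matrix n x a * path_matrix n x b"
proof (rule eq_matI)
  fix i j
  assume "i < dim_row (path_matrix n x a * path_matrix n x b)"
    "j < dim_col (path_matrix n x a * path_matrix n x b)"
  then have i: "i < n" and j: "j < n"
    by simp_all
  define g where "g k r =
    (if (i + k + r) mod n = j then a (i, k) * b ((i + k) mod n, r) * x ^ (k + r) else 0)" for k r
  have "(path_matrix n x a * path_matrix n x b) $$ (i, j) = (\<Sum>k<N. \<Sum>r<M. g k r)"
    unfolding g_def using n a b i j by (rule path_matrix_times_entry)
  also have "\<dots> = (\<Sum>m<N + M. \<Sum>k\<le>m. g k (m - k))"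
    using a b
    by (intro sum_product_eq_sum_triangle) (auto simp: g_def length_bound_def split: if_splits)
  also have "\<dots> = (\<Sum>m<N + M. if (i + m) mod n = j then pa_mult n a b (i, m) * x ^ m else 0)"
  proof (intro sum.cong refl)
    fix m
    have "(\<Sum>k\<le>m. g k (m - k)) =
      (\<Sum>k\<le>m. if (i + m) mod n = j then a (i, k) * b ((i + k) mod n, m - k) * x ^ m else 0)"
      by (intro sum.cong refl) (simp add: g_def)
    then show "(\<Sum>k\<le>m. g k (m - k)) =
      (if (i + m) mod n = j then pa_mult n a b (i, m) * x ^ m else 0)"
      by (simp add: pa_mult_def sum_distrib_right)
  qed
  also have "\<dots> = path_matrix n x (pa_mult n a b) $$ (i, j)"
    using length_bound_pa_mult[OF a b] i j by (rule path_matrix_entry[symmetric])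
  finally show "path_matrix n x (pa_mult n a b) $$ (i, j) =
    (path_matrix n x a * path_matrix n x b) $$ (i, j)"
    by (rule sym)
qed simp_all

lemma path_matrix_word:
  assumes "0 < n" "\<And>i. s i \<in> pa_carrier n"
  shows "path_matrix n x (pa_word n s w) = mat_word n (\<lambda>i. path_matrix n x (s i)) w"
proof (induction w)
  case Nil
  show ?case
    using assms(1) by (simp add: pa_word_def mat_word_def path_matrix_one)
next
  case (Cons i w)
  obtain N M where "length_bound (s i) N" "length_bound (pa_word n s w) M"
    using assms(2) pa_word_carrier[OF assms(2)] by (meson pa_carrier_iff)
  then show ?case
    using Cons.IH assms(1) by (simp add: pa_word_def mat_word_def path_matrix_mult)
qed

lemma path_matrix_lincomb_entry:
  assumes "finite W" "\<And>w. w \<in> W \<Longrightarrow> b w \<in> pa_carrier n" "i < n" "j < n"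
  shows "path_matrix n x (\<lambda>p. \<Sum>w\<in>W. c w * b w p) $$ (i, j) =
    (\<Sum>w\<in>W. c w * path_matrix n x (b w) $$ (i, j))"
proof -
  obtain N where N: "\<forall>w\<in>W. length_bound (b w) N"
    using ex_length_bound_family[of W b n] assms(1,2) by blast
  have "length_bound (\<lambda>p. \<Sum>w\<in>W. c w * b w p) N"
    using N unfolding length_bound_def by (auto intro: ccontr intro!: sum.neutral)
  then have "path_matrix n x (\<lambda>p. \<Sum>w\<in>W. c w * b w p) $$ (i, j) =
    (\<Sum>k<N. if (i + k) mod n = j then (\<Sum>w\<in>W. c w * b w (i, k)) * x ^ k else 0)"
    using assms(3,4) by (rule path_matrix_entry)
  also have "\<dots> = (\<Sum>k<N. \<Sum>w\<in>W. c w * (if (i + k) mod n = j then b w (i, k) * x ^ k else 0))"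
    by (intro sum.cong refl) (simp add: sum_distrib_right mult.assoc)
  also have "\<dots> = (\<Sum>w\<in>W. \<Sum>k<N. c w * (if (i + k) mod n = j then b w (i, k) * x ^ k else 0))"
    by (rule sum.swap)
  also have "\<dots> = (\<Sum>w\<in>W. c w * path_matrix n x (b w) $$ (i, j))"
  proof (intro sum.cong refl)
    fix w
    assume "w \<in> W"
    then show "(\<Sum>k<N. c w * (if (i + k) mod n = j then b w (i, k) * x ^ k else 0)) =
      c w * path_matrix n x (b w) $$ (i, j)"
      using N assms(3,4) by (simp add: path_matrix_entry[of "b w" N] sum_distrib_left)
  qed
  finally show ?thesis .
qed

lemma path_matrix_pa_eval:
  assumes "0 < n" "f \<in> ncpolys" "\<And>i. s i \<in> pa_carrier n"
  shows "path_matrix n x (pa_eval n f s) = mat_eval n f (\<lambda>i. path_matrix n x (s i))"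
proof (rule eq_matI)
  fix i j
  assume "i < dim_row (mat_eval n f (\<lambda>i. path_matrix n x (s i)))"
    "j < dim_col (mat_eval n f (\<lambda>i. path_matrix n x (s i)))"
  then have i: "i < n" and j: "j < n"
    by (simp_all add: mat_eval_def)
  have "finite {w. f w \<noteq> 0}"
    using assms(2) by (simp add: ncpolys_def)
  then have "path_matrix n x (pa_eval n f s) $$ (i, j) =
    (\<Sum>w | f w \<noteq> 0. f w * path_matrix n x (pa_word n s w) $$ (i, j))"
    unfolding pa_eval_def using pa_word_carrier[OF assms(3)] i j
    by (rule path_matrix_lincomb_entry)
  also have "\<dots> = mat_eval n f (\<lambda>i. path_matrix n x (s i)) $$ (i, j)"
    using i j assms(1,3) by (simp add: path_matrix_word mat_eval_def)
  finally show "path_matrix n x (pa_eval n f s) $$ (i, j) =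
    mat_eval n f (\<lambda>i. path_matrix n x (s i)) $$ (i, j)" .
qed (simp_all add: mat_eval_def)

definition paths_of_matrix :: "nat \<Rightarrow> 'a::zero mat \<Rightarrow> (nat \<times> nat \<Rightarrow> 'a)" where
  "paths_of_matrix n A = (\<lambda>(i, k). if i < n \<and> k < n then A $$ (i, (i + k) mod n) else 0)"

lemma paths_of_matrix_carrier: "paths_of_matrix n A \<in> pa_carrier n"
  unfolding pa_carrier_iff length_bound_def paths_of_matrix_def by auto

lemma path_matrix_paths_of_matrix:
  assumes "0 < n" "A \<in> carrier_mat n n"
  shows "path_matrix n 1 (paths_of_matrix n A) = A"
proof (rule eq_matI)
  fix i j
  assume "i < dim_row A" "j < dim_col A"
  then have i: "i < n" and j: "j < n"
    using assms(2) by auto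
  have "length_bound (paths_of_matrix n A) n"
    unfolding length_bound_def paths_of_matrix_def by auto
  then have "path_matrix n 1 (paths_of_matrix n A) $$ (i, j) =
    (\<Sum>k<n. if (i + k) mod n = j then paths_of_matrix n A (i, k) * 1 ^ k else 0)"
    using i j by (rule path_matrix_entry)
  also have "\<dots> = (\<Sum>k<n. if k = (j + n - i) mod n then A $$ (i, j) else 0)"
  proof (intro sum.cong refl)
    fix k
    assume "k \<in> {..<n}"
    then have "k < n"
      by simp
    then show "(if (i + k) mod n = j then paths_of_matrix n A (i, k) * 1 ^ k else 0) =
      (if k = (j + n - i) mod n then A $$ (i, j) else 0)"
      using add_mod_eq_iff[OF i j \<open>k < n\<close>] i by (auto simp: paths_of_matrix_def)
  qed
  also have "\<dots> = A $$ (i, j)"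
    using assms(1) by simp
  finally show "path_matrix n 1 (paths_of_matrix n A) $$ (i, j) = A $$ (i, j)" .
qed (use assms(2) in simp_all)

lemma path_matrix_eq_0_imp_eq_0:
  fixes a :: "nat \<times> nat \<Rightarrow> 'a::field_char_0"
  assumes "a \<in> pa_carrier n" "\<And>x. path_matrix n x a = 0\<^sub>m n n"
  shows "a = (\<lambda>_. 0)"
proof
  fix p :: "nat \<times> nat"
  obtain i k where p: "p = (i, k)"
    by fastforce
  obtain N where N: "length_bound a N" and rows: "\<forall>i k. a (i, k) \<noteq> 0 \<longrightarrow> i < n"
    using assms(1) unfolding pa_carrier_iff by blast
  show "a p = 0"
  proof (rule ccontr)
    assume "a p \<noteq> 0"
    then have i: "i < n" and k: "k < N"
      using N rows unfolding p length_bound_def by auto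
    define j where "j = (i + k) mod n"
    have j: "j < n"
      using i unfolding j_def by simp
    define c where "c l = (if (i + l) mod n = j then a (i, l) else 0)" for l
    have "(\<Sum>l<N. c l * x ^ l) = 0" for x
    proof -
      have "(\<Sum>l<N. c l * x ^ l) = (\<Sum>l<N. if (i + l) mod n = j then a (i, l) * x ^ l else 0)"
        by (intro sum.cong refl) (simp add: c_def)
      also have "\<dots> = path_matrix n x a $$ (i, j)"
        using path_matrix_entry[OF N i j] by simp
      also have "\<dots> = 0"
        using assms(2) i j by simp
      finally show ?thesis .
    qed
    then have "c k = 0"
      using k by (rule polyfun_eq_0_imp_coeff_eq_0)
    with \<open>a p \<noteq> 0\<close> show False
      unfolding c_def j_def p by simp
  qed
qed

lemma Id_pa_subset_Id_mat:
  assumes "0 < n"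
  shows "Id_pa n \<subseteq> Id_mat n"
proof
  fix f
  assume "f \<in> Id_pa n"
  then have f: "f \<in> ncpolys"
    and vanish: "\<And>s. \<forall>i. s i \<in> pa_carrier n \<Longrightarrow> pa_eval n f s = (\<lambda>_. 0)"
    unfolding Id_pa_def by auto
  have "mat_eval n f S = 0\<^sub>m n n" if "\<forall>i. S i \<in> carrier_mat n n" for S
  proof -
    let ?s = "\<lambda>i. paths_of_matrix n (S i)"
    have "S = (\<lambda>i. path_matrix n 1 (?s i))"
      using that assms by (simp add: path_matrix_paths_of_matrix)
    then have "mat_eval n f S = path_matrix n 1 (pa_eval n f ?s)"
      using assms f by (simp add: path_matrix_pa_eval paths_of_matrix_carrier)
    also have "pa_eval n f ?s = (\<lambda>_. 0)"
      by (rule vanish) (simp add: paths_of_matrix_carrier)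
    also have "path_matrix n 1 (\<lambda>_. 0) = 0\<^sub>m n n"
      by (rule path_matrix_zero)
    finally show ?thesis .
  qed
  with f show "f \<in> Id_mat n"
    unfolding Id_mat_def by blast
qed

lemma Id_mat_subset_Id_pa:
  assumes "0 < n"
  shows "Id_mat n \<subseteq> (Id_pa n :: 'a::field_char_0 ncpoly set)"
proof
  fix f :: "'a ncpoly"
  assume "f \<in> Id_mat n"
  then have f: "f \<in> ncpolys"
    and vanish: "\<And>S. \<forall>i. S i \<in> carrier_mat n n \<Longrightarrow> mat_eval n f S = 0\<^sub>m n n"
    unfolding Id_mat_def by auto
  have "pa_eval n f s = (\<lambda>_. 0)" if s: "\<forall>i. s i \<in> pa_carrier n" for s
  proof (rule path_matrix_eq_0_imp_eq_0)
    show "pa_eval n f s \<in> pa_carrier n"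
      using f s by (simp add: pa_eval_carrier)
    fix x
    have "path_matrix n x (pa_eval n f s) = mat_eval n f (\<lambda>i. path_matrix n x (s i))"
      using assms f s by (intro path_matrix_pa_eval) simp_all
    also have "\<dots> = 0\<^sub>m n n"
      using path_matrix_carrier by (intro vanish) blast
    finally show "path_matrix n x (pa_eval n f s) = 0\<^sub>m n n" .
  qed
  with f show "f \<in> Id_pa n"
    unfolding Id_pa_def by blast
qed

theorem corollary3:
  fixes n :: nat
  assumes "n \<ge> 2"
  shows "(Id_pa n :: 'a::field_char_0 ncpoly set) = Id_mat n"
proof -
  have "0 < n"
    using assms by simp
  then show ?thesis
    by (intro equalityI Id_pa_subset_Id_mat Id_mat_subset_Id_pa)
qed

end
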